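(* Let $1\le D\le K-1$ and let $\mathbf{L}$ be the $(K,D)$ AIR matrix. Let $\mathbf{L}(j,k)=1$ with the entry $(j,k)$ lying in the even submatrix $\mathbf{I}_{\lambda_{2i}\times\beta_{2i}\lambda_{2i}}$, and let $j_R=j-(K-\lambda_{2i})$ and $k_R=k-(K-D-\lambda_{2i-1})$ be its row and column offsets within that submatrix. (1) If $i\in[0:\lfloor l/2\rfloor]$ and $k_R\in[0:(\beta_{2i}-1)\lambda_{2i}-1]$, then $d_{right}(j,k)=\lambda_{2i}$. (2) If $i\in[0:\lfloor l/2\rfloor-1]$, $k_R\in[(\beta_{2i}-1)\lambda_{2i}:\beta_{2i}\lambda_{2i}-1]$, and $j_R=c\lambda_{2i+1}+d$ with integers $c\ge0$, $0\le d<\lambda_{2i+1}$, then $d_{right}(j,k)=\lambda_{2i}-c\lambda_{2i+1}$.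
   Context: Notation: $[a:b]=\{a,\dots,b\}$. Let $K,D$ be integers with $1\le D\le K-1$. Define $\lambda_{-1}=K-D$, $\lambda_0=D$ and recursively, by Euclidean division, $\lambda_{i-1}=\beta_i\lambda_i+\lambda_{i+1}$ with $0\le\lambda_{i+1}<\lambda_i$, for $i=0,1,2,\dots$, stopping at the index $l\ge0$ with $\lambda_{l+1}=0$; $\beta_0\ge0$ may be $0$, $\beta_i\ge1$ for $i\ge1$. Set $\lambda_j=0$ for $j>l$. For $n\mid m$, $\mathbf{I}_{m\times n}$ is $m/n$ copies of the $n\times n$ identity stacked vertically and $\mathbf{I}_{n\times m}$ its transpose. The $(K,D)$ AIR matrix $\mathbf{L}$ is the $K\times(K-D)$ $0/1$ matrix (rows $[0:K-1]$, columns $[0:K-D-1]$) that is zero except in the blocks: the $(K-D)\times(K-D)$ identity in rows and columns $[0:K-D-1]$; for $0\le 2i\le l$, the even submatrix $\mathbf{I}_{\lambda_{2i}\times\beta_{2i}\lambda_{2i}}$ in rows $[K-\lambda_{2i}:K-1]$, columns $[K-D-\lambda_{2i-1}:K-D-\lambda_{2i+1}-1]$ (absent if $i=0,\beta_0=0$); for $1\le 2i+1\le l$, the odd submatrix $\mathbf{I}_{\beta_{2i+1}\lambda_{2i+1}\times\lambda_{2i+1}}$ in rows $[K-\lambda_{2i}:K-\lambda_{2i+2}-1]$, columns $[K-D-\lambda_{2i+1}:K-D-1]$. Right-distance: for $\mathbf{L}(j,k)=1$ with $(j,k)$ in an even submatrix, let $k'$ be the smallest column index with $k'>k$ and $\mathbf{L}(j,k')=1$;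 then $d_{right}(j,k)=k'-k$. *)

theory Defs
  imports Main
begin

text \<open>Euclidean remainder sequence: lamS K D n = lambda_(n-1), i.e.
  lamS 0 = K - D (= lambda_(-1)), lamS 1 = D (= lambda_0),
  lambda_(i+1) = lambda_(i-1) mod lambda_i, and lambda_j = 0 once a zero occurred.\<close>
fun lamS :: "nat \<Rightarrow> nat \<Rightarrow> nat \<Rightarrow> nat" where
  "lamS K D 0 = K - D"
| "lamS K D (Suc 0) = D"
| "lamS K D (Suc (Suc n)) =
     (if lamS K D (Suc n) = 0 then 0 else lamS K D n mod lamS K D (Suc n))"

definition lam :: "nat \<Rightarrow> nat \<Rightarrow> int \<Rightarrow> nat" where
  "lam K D i = lamS K D (nat (i + 1))"

text \<open>beta_i = quotient in lambda_(i-1) = beta_i lambda_i + lambda_(i+1).\<close>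
definition beta :: "nat \<Rightarrow> nat \<Rightarrow> nat \<Rightarrow> nat" where
  "beta K D i = lam K D (int i - 1) div lam K D (int i)"

definition lidx :: "nat \<Rightarrow> nat \<Rightarrow> nat" where
  "lidx K D = (LEAST l. lam K D (int l + 1) = 0)"

text \<open>Even submatrix I_(lam x beta lam): local entry (r,c) is 1 iff c mod lam = r.
  Odd submatrix I_(beta lam x lam): local entry (r,c) is 1 iff r mod lam = c.\<close>
definition air :: "nat \<Rightarrow> nat \<Rightarrow> nat \<Rightarrow> nat \<Rightarrow> nat" where
  "air K D j k = of_bool (j < K \<and> k < K - D \<and>
     ((j < K - D \<and> k = j)
    \<or> (\<exists>i::nat. 2 * i \<le> lidx K D
         \<and> K - lam K D (2 * int i) \<le> j
         \<and> K - D - lam K D (2 * int i - 1) \<le> k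
         \<and> k < K - D - lam K D (2 * int i + 1)
         \<and> (k - (K - D - lam K D (2 * int i - 1))) mod lam K D (2 * int i)
             = j - (K - lam K D (2 * int i)))
    \<or> (\<exists>i::nat. 2 * i + 1 \<le> lidx K D
         \<and> K - lam K D (2 * int i) \<le> j
         \<and> j < K - lam K D (2 * int i + 2)
         \<and> K - D - lam K D (2 * int i + 1) \<le> k
         \<and> (j - (K - lam K D (2 * int i))) mod lam K D (2 * int i + 1)
             = k - (K - D - lam K D (2 * int i + 1)))))"

definition dright :: "nat \<Rightarrow> nat \<Rightarrow> nat \<Rightarrow> nat \<Rightarrow> nat" where
  "dright K D j k = (LEAST k'. k < k' \<and> air K D j k' = 1) - k"

end

theory Submission
  imports Defs
begin

text \<open>
  The sequence \<open>\<lambda>\<close> is antitone along each parity class, so the even submatrices occupy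
  pairwise disjoint column ranges and the odd ones pairwise disjoint row ranges, and no even
  submatrix meets an odd one. Hence inside the region of one submatrix the AIR matrix is just
  that submatrix: row \<open>j\<close> of the even block \<open>i\<close> has its ones at the column offsets congruent
  to \<open>j\<^sub>R\<close> modulo \<open>\<lambda>\<^sub>2\<^sub>i\<close>, which gives distance \<open>\<lambda>\<^sub>2\<^sub>i\<close> away from the last period.
  From the last period the next one lies in column \<open>K - D - \<lambda>\<^sub>2\<^sub>i\<^sub>+\<^sub>1 + d\<close>: if row \<open>j\<close>
  still belongs to the odd block \<open>i\<close>, its one there is at offset \<open>j\<^sub>R mod \<lambda>\<^sub>2\<^sub>i\<^sub>+\<^sub>1 = d\<close>;
  otherwise it belongs to the even block \<open>i + 1\<close>, and since
  \<open>\<lambda>\<^sub>2\<^sub>i = \<beta>\<^sub>2\<^sub>i\<^sub>+\<^sub>1 \<lambda>\<^sub>2\<^sub>i\<^sub>+\<^sub>1 + \<lambda>\<^sub>2\<^sub>i\<^sub>+\<^sub>2\<close> its row offset there is again \<open>d\<close>.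
\<close>

declare lamS.simps(3)[simp del]

lemma lamS_Suc_Suc_mod:
  "0 < lamS K D (Suc n) \<Longrightarrow> lamS K D (Suc (Suc n)) = lamS K D n mod lamS K D (Suc n)"
  by (simp add: lamS.simps(3))

lemma antimono_lamS_even: "antimono (\<lambda>t. lamS K D (2 * t))"
  and antimono_lamS_odd: "antimono (\<lambda>t. lamS K D (Suc (2 * t)))"
  unfolding antimono_iff_le_Suc by (simp_all add: lamS.simps(3))

lemma lamS_even_le: "lamS K D (2 * i) \<le> K - D"
  using antimonoD[OF antimono_lamS_even[of K D], of 0 i] by simp

lemma lamS_odd_le: "lamS K D (Suc (2 * i)) \<le> D"
  using antimonoD[OF antimono_lamS_odd[of K D], of 0 i] by simp

lemma lamS_pos:
  assumes "0 < D" "D < K" "n \<le> lidx K D + 1"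
  shows "0 < lamS K D n"
proof -
  consider "n = 0" | "n = 1" | p where "n = Suc (Suc p)"
    by (metis One_nat_def not0_implies_Suc)
  then show ?thesis
  proof cases
    case 3
    then have "p < lidx K D" using assms(3) by simp
    then have "lam K D (int p + 1) \<noteq> 0" unfolding lidx_def by (rule not_less_Least)
    then show ?thesis using 3 by (simp add: lam_def nat_add_distrib)
  qed (use assms in auto)
qed

lemma lam_even [simp]: "lam K D (2 * int i) = lamS K D (Suc (2 * i))"
  and lam_even_minus_1 [simp]: "lam K D (2 * int i - 1) = lamS K D (2 * i)"
  and lam_odd [simp]: "lam K D (2 * int i + 1) = lamS K D (Suc (Suc (2 * i)))"
  and lam_even_plus_2 [simp]: "lam K D (2 * int i + 2) = lamS K D (Suc (Suc (Suc (2 * i))))"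
  by (simp_all add: lam_def nat_add_distrib nat_mult_distrib numeral_3_eq_3)

lemma beta_even: "beta K D (2 * i) = lamS K D (2 * i) div lamS K D (Suc (2 * i))"
  unfolding beta_def by (metis lam_even lam_even_minus_1 of_nat_mult of_nat_numeral)

definition even_entry :: "nat \<Rightarrow> nat \<Rightarrow> nat \<Rightarrow> nat \<Rightarrow> nat \<Rightarrow> bool" where
  "even_entry K D i j k \<longleftrightarrow> 2 * i \<le> lidx K D
     \<and> K - lamS K D (Suc (2 * i)) \<le> j
     \<and> K - D - lamS K D (2 * i) \<le> k \<and> k < K - D - lamS K D (Suc (Suc (2 * i)))
     \<and> (k - (K - D - lamS K D (2 * i))) mod lamS K D (Suc (2 * i))
          = j - (K - lamS K D (Suc (2 * i)))"

definition odd_entry :: "nat \<Rightarrow> nat \<Rightarrow> nat \<Rightarrow> nat \<Rightarrow> nat \<Rightarrow> bool" where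
  "odd_entry K D i j k \<longleftrightarrow> 2 * i + 1 \<le> lidx K D
     \<and> K - lamS K D (Suc (2 * i)) \<le> j \<and> j < K - lamS K D (Suc (Suc (Suc (2 * i))))
     \<and> K - D - lamS K D (Suc (Suc (2 * i))) \<le> k
     \<and> (j - (K - lamS K D (Suc (2 * i)))) mod lamS K D (Suc (Suc (2 * i)))
          = k - (K - D - lamS K D (Suc (Suc (2 * i))))"

lemma air_eq_1_iff:
  "air K D j k = 1 \<longleftrightarrow> j < K \<and> k < K - D \<and>
     (j < K - D \<and> k = j \<or> (\<exists>i. even_entry K D i j k) \<or> (\<exists>i. odd_entry K D i j k))"
  by (simp add: air_def even_entry_def odd_entry_def)

lemma antimono_intervals_disjoint:
  fixes s :: "nat \<Rightarrow> nat"
  assumes "antimono s"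
    and "c - s i \<le> x" "x < c - s (Suc i)" and "c - s i' \<le> x" "x < c - s (Suc i')"
  shows "i = i'"
proof (rule ccontr)
  assume "i \<noteq> i'"
  then consider "Suc i \<le> i'" | "Suc i' \<le> i" by linarith
  then show False
  proof cases
    case 1
    then have "c - s (Suc i) \<le> c - s i'"
      using antimonoD[OF assms(1)] by (simp add: diff_le_mono2)
    then show False using assms by linarith
  next
    case 2
    then have "c - s (Suc i') \<le> c - s i"
      using antimonoD[OF assms(1)] by (simp add: diff_le_mono2)
    then show False using assms by linarith
  qed
qed

lemma antimono_staircase_disjoint:
  fixes s t :: "nat \<Rightarrow> nat"
  assumes "antimono s" "antimono t"
    and "c - t i \<le> j" "x < d - s (Suc i)" and "j < c - t (Suc i')" "d - s (Suc i') \<le> x"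
  shows False
proof (cases "i \<le> i'")
  case True
  then have "d - s (Suc i) \<le> d - s (Suc i')"
    using antimonoD[OF assms(1)] by (simp add: diff_le_mono2)
  then show False using assms by linarith
next
  case False
  then have "c - t (Suc i') \<le> c - t i"
    using antimonoD[OF assms(2)] by (simp add: diff_le_mono2)
  then show False using assms by linarith
qed

lemma air_on_even_block:
  assumes "2 * i \<le> lidx K D" "K - lamS K D (Suc (2 * i)) \<le> j" "j < K"
    and "K - D - lamS K D (2 * i) \<le> x" "x < K - D - lamS K D (Suc (Suc (2 * i)))"
  shows "air K D j x = 1 \<longleftrightarrow>
    (x - (K - D - lamS K D (2 * i))) mod lamS K D (Suc (2 * i)) = j - (K - lamS K D (Suc (2 * i)))"
    (is "_ \<longleftrightarrow> ?pattern")
proof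
  assume air: "air K D j x = 1"
  have "K - D \<le> j" using assms(2) lamS_odd_le[of K D i] by linarith
  with air consider i' where "even_entry K D i' j x" | i' where "odd_entry K D i' j x"
    unfolding air_eq_1_iff by auto
  then show ?pattern
  proof cases
    case (1 i')
    then have "i = i'"
      using antimono_intervals_disjoint[OF antimono_lamS_even[of K D], of "K - D" i x i'] assms(4,5)
      by (simp add: even_entry_def)
    then show ?thesis using 1 by (simp add: even_entry_def)
  next
    case (2 i')
    then show ?thesis
      using antimono_staircase_disjoint[OF antimono_lamS_even[of K D] antimono_lamS_odd[of K D],
          of K i j x "K - D" i'] assms(2,5)
      by (simp add: odd_entry_def)
  qed
next
  assume ?pattern
  then have "even_entry K D i j x" using assms by (simp add: even_entry_def)
  then show "air K D j x = 1" unfolding air_eq_1_iff using assms by auto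
qed

lemma air_on_odd_block:
  assumes "2 * i + 1 \<le> lidx K D"
    and "K - lamS K D (Suc (2 * i)) \<le> j" "j < K - lamS K D (Suc (Suc (Suc (2 * i))))"
    and "K - D - lamS K D (Suc (Suc (2 * i))) \<le> x" "x < K - D"
  shows "air K D j x = 1 \<longleftrightarrow>
    (j - (K - lamS K D (Suc (2 * i)))) mod lamS K D (Suc (Suc (2 * i)))
      = x - (K - D - lamS K D (Suc (Suc (2 * i))))"
    (is "_ \<longleftrightarrow> ?pattern")
proof
  assume air: "air K D j x = 1"
  have "K - D \<le> j" using assms(2) lamS_odd_le[of K D i] by linarith
  with air consider i' where "even_entry K D i' j x" | i' where "odd_entry K D i' j x"
    unfolding air_eq_1_iff by auto
  then show ?pattern
  proof cases
    case (1 i')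
    then show ?thesis
      using antimono_staircase_disjoint[OF antimono_lamS_even[of K D] antimono_lamS_odd[of K D],
          of K i' j x "K - D" i] assms(3,4)
      by (simp add: even_entry_def)
  next
    case (2 i')
    then have "i = i'"
      using antimono_intervals_disjoint[OF antimono_lamS_odd[of K D], of K i j i'] assms(2,3)
      by (simp add: odd_entry_def)
    then show ?thesis using 2 by (simp add: odd_entry_def)
  qed
next
  assume ?pattern
  then have "odd_entry K D i j x" using assms by (simp add: odd_entry_def)
  then show "air K D j x = 1" unfolding air_eq_1_iff using assms by auto
qed

lemma dright_eqI:
  assumes "k < k'" "air K D j k' = 1" "\<And>y. k < y \<Longrightarrow> y < k' \<Longrightarrow> air K D j y \<noteq> 1"
  shows "dright K D j k = k' - k"
proof -
  have "(LEAST y. k < y \<and> air K D j y = 1) = k'"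
    by (rule Least_equality) (use assms in \<open>auto intro: leI\<close>)
  then show ?thesis by (simp add: dright_def)
qed

lemma mod_neq_within_period:
  fixes n m b :: nat
  assumes "n < m" "m < n + b"
  shows "m mod b \<noteq> n mod b"
proof -
  have "\<not> b dvd m - n" using assms by (intro nat_dvd_not_less) auto
  then show ?thesis using assms by (simp add: mod_eq_dvd_iff_nat)
qed

lemma mod_eq_in_last_period:
  fixes s k m b :: nat
  assumes "s \<le> k" "k < s + m * b" "s + m * b \<le> k + b"
  shows "k + b = s + m * b + (k - s) mod b"
proof -
  obtain u where k: "k = s + u" using assms(1) le_Suc_ex by blast
  have u: "u = u div b * b + u mod b" by simp
  have "0 < b" using assms(1,2) by (cases "b = 0") auto
  have "u div b * b < m * b" using assms(2) k u by linarith
  then have "u div b < m" by simp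
  moreover have "m * b < u div b * b + 2 * b"
    using assms(3) k u mod_less_divisor[OF \<open>0 < b\<close>, of u] by linarith
  then have "m * b < (u div b + 2) * b" by (simp add: algebra_simps)
  then have "m < u div b + 2" by (metis mult_less_cancel2)
  ultimately have "m = Suc (u div b)" by simp
  then show ?thesis using k u by simp
qed

lemma diff_less_pred_mult_iff:
  fixes s k m b :: nat
  assumes "s \<le> k"
  shows "k - s < (m - 1) * b \<longleftrightarrow> k + b < s + m * b"
  using assms by (cases m) auto

lemma pred_mult_le_diff_iff:
  fixes s k m b :: nat
  assumes "s \<le> k"
  shows "(m - 1) * b \<le> k - s \<longleftrightarrow> s + m * b \<le> k + b"
  using assms by (cases m) auto

lemma even_block_columns_width:
  assumes "0 < lamS K D (Suc (2 * i))"
  shows "K - D - lamS K D (Suc (Suc (2 * i)))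
    = K - D - lamS K D (2 * i)
      + lamS K D (2 * i) div lamS K D (Suc (2 * i)) * lamS K D (Suc (2 * i))"
  using lamS_Suc_Suc_mod[OF assms] lamS_even_le[of K D i]
    div_mult_mod_eq[of "lamS K D (2 * i)" "lamS K D (Suc (2 * i))"]
  by linarith

lemma air_even_block_gap:
  fixes K D i j k y :: nat
  defines "a \<equiv> lamS K D (2 * i)" and "b \<equiv> lamS K D (Suc (2 * i))"
    and "e \<equiv> lamS K D (Suc (Suc (2 * i)))"
  assumes "2 * i \<le> lidx K D" "K - b \<le> j" "j < K" and k: "K - D - a \<le> k" "air K D j k = 1"
    and y: "k < y" "y < k + b" "y < K - D - e"
  shows "air K D j y \<noteq> 1"
proof
  assume "air K D j y = 1"
  then have "(y - (K - D - a)) mod b = (k - (K - D - a)) mod b"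
    using air_on_even_block[of i K D j] assms by (simp add: a_def b_def e_def)
  moreover have "(y - (K - D - a)) mod b \<noteq> (k - (K - D - a)) mod b"
    using k(1) y(1,2) by (intro mod_neq_within_period) auto
  ultimately show False by simp
qed

lemma dright_even_block_interior:
  fixes K D i j k :: nat
  defines "a \<equiv> lamS K D (2 * i)" and "b \<equiv> lamS K D (Suc (2 * i))"
    and "e \<equiv> lamS K D (Suc (Suc (2 * i)))"
  assumes D: "0 < D" "D < K" and l: "2 * i \<le> lidx K D" and j: "K - b \<le> j" "j < K"
    and k: "K - D - a \<le> k" "air K D j k = 1" "k - (K - D - a) < (a div b - 1) * b"
  shows "(\<exists>k'. k < k' \<and> air K D j k' = 1) \<and> dright K D j k = b"
proof -
  have "0 < b" unfolding b_def using D l by (intro lamS_pos) auto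
  then have "K - D - e = K - D - a + a div b * b"
    using even_block_columns_width[of K D i] unfolding a_def b_def e_def by simp
  then have "k + b < K - D - e" using k(3) diff_less_pred_mult_iff[OF k(1)] by simp
  have "(k - (K - D - a)) mod b = j - (K - b)"
    using air_on_even_block[OF l j[unfolded b_def] k(1)[unfolded a_def]]
      \<open>k + b < K - D - e\<close> k(2)
    unfolding a_def b_def e_def by simp
  moreover have "k + b - (K - D - a) = k - (K - D - a) + b" using k(1) by simp
  ultimately have "(k + b - (K - D - a)) mod b = j - (K - b)" by simp
  then have "air K D j (k + b) = 1"
    using air_on_even_block[OF l j[unfolded b_def]] k(1) \<open>k + b < K - D - e\<close>
    unfolding a_def b_def e_def by simp
  moreover have "dright K D j k = k + b - k"
    using \<open>air K D j (k + b) = 1\<close> \<open>k + b < K - D - e\<close> \<open>0 < b\<close>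
      air_even_block_gap[OF l j[unfolded b_def] k(1,2)[unfolded a_def]]
    unfolding b_def e_def by (intro dright_eqI) auto
  ultimately show ?thesis using \<open>0 < b\<close> by (metis add.commute diff_add_inverse less_add_same_cancel2)
qed

lemma first_hit_after_even_block:
  fixes K D i j c d x :: nat
  defines "b \<equiv> lamS K D (Suc (2 * i))" and "e \<equiv> lamS K D (Suc (Suc (2 * i)))"
  assumes D: "0 < D" "D < K" and "2 * i + 2 \<le> lidx K D" and j: "K - b \<le> j" "j < K"
    and row: "j - (K - b) = c * e + d" "d < e"
    and x: "K - D - e \<le> x" "x \<le> K - D - e + d"
  shows "air K D j x = 1 \<longleftrightarrow> x = K - D - e + d"
proof -
  define f where "f = lamS K D (Suc (Suc (Suc (2 * i))))"
  define g where "g = lamS K D (Suc (Suc (Suc (Suc (2 * i)))))"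
  have "0 < e" "0 < f"
    unfolding e_def f_def using D \<open>2 * i + 2 \<le> lidx K D\<close> by (auto intro!: lamS_pos)
  have f: "f = b mod e" and g: "g = e mod f"
    unfolding b_def e_def f_def g_def using \<open>0 < e\<close> \<open>0 < f\<close>
    by (simp_all add: lamS_Suc_Suc_mod e_def f_def)
  have "e \<le> K - D" unfolding e_def using lamS_even_le[of K D "Suc i"] by simp
  have "b \<le> K" unfolding b_def using lamS_odd_le[of K D i] D(2) by simp
  have "x < K - D" using x row(2) \<open>e \<le> K - D\<close> by linarith
  show ?thesis
  proof (cases "j < K - f")
    case True
    then have "air K D j x = 1 \<longleftrightarrow> (c * e + d) mod e = x - (K - D - e)"
      using air_on_odd_block[of i K D j x] assms \<open>x < K - D\<close> row(1)
      by (simp add: b_def e_def f_def)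
    then show ?thesis using row(2) x(1) by auto
  next
    case False
    have "f < e" using f \<open>0 < e\<close> by simp
    have "b = b div e * e + f" using f by simp
    \<comment> \<open>the row lies in the even block \<open>i + 1\<close>, where its offset is again \<open>d\<close>\<close>
    have jR: "b - f \<le> j - (K - b)" "j - (K - b) < b" using False j \<open>b \<le> K\<close> by linarith+
    have "(j - (K - b)) div e = b div e"
      using jR \<open>b = b div e * e + f\<close> \<open>f < e\<close> by (intro div_nat_eqI) (simp_all add: algebra_simps)
    moreover have "(j - (K - b)) div e = c" using row by simp
    ultimately have "c * e = b - f" using \<open>b = b div e * e + f\<close> by simp
    moreover have "f \<le> b" using f by simp
    ultimately have offset: "j - (K - f) = d" "d < f"
      using row jR False j \<open>b \<le> K\<close> by linarith+
    have "f + g \<le> e"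
    proof -
      have "e = e div f * f + g" using g by simp
      moreover have "1 \<le> e div f" using \<open>f < e\<close> \<open>0 < f\<close> by (simp add: Suc_le_eq div_greater_zero_iff)
      ultimately show ?thesis using mult_le_mono1[of 1 "e div f" f] by linarith
    qed
    then have "x < K - D - g" using x offset(2) \<open>e \<le> K - D\<close> by linarith
    then have "air K D j x = 1 \<longleftrightarrow> (x - (K - D - e)) mod f = d"
      using air_on_even_block[of "Suc i" K D j x] assms x(1) False offset(1)
      by (simp add: e_def f_def g_def)
    moreover have "x - (K - D - e) < f" using x offset(2) by linarith
    ultimately show ?thesis using x(1) by auto
  qed
qed

lemma dright_even_block_last_period:
  fixes K D i j k c d :: nat
  defines "a \<equiv> lamS K D (2 * i)" and "b \<equiv> lamS K D (Suc (2 * i))"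
    and "e \<equiv> lamS K D (Suc (Suc (2 * i)))"
  assumes D: "0 < D" "D < K" and l: "2 * i + 2 \<le> lidx K D" and j: "K - b \<le> j" "j < K"
    and k: "K - D - a \<le> k" "air K D j k = 1"
      "(a div b - 1) * b \<le> k - (K - D - a)" "k - (K - D - a) < a div b * b"
    and row: "j - (K - b) = c * e + d" "d < e"
  shows "(\<exists>k'. k < k' \<and> air K D j k' = 1) \<and> int (dright K D j k) = int b - int c * int e"
proof -
  define k' where "k' = K - D - e + d"
  have "0 < b" unfolding b_def using D l by (intro lamS_pos) auto
  then have width: "K - D - e = K - D - a + a div b * b"
    using even_block_columns_width[of K D i] unfolding a_def b_def e_def by simp
  have "k < K - D - e" using k(1,4) width by (simp add: less_diff_conv2)
  have "K - D - e \<le> k + b" using k(3) width pred_mult_le_diff_iff[OF k(1)] by simp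
  have hit: "air K D j y = 1 \<longleftrightarrow> y = k'" if "K - D - e \<le> y" "y \<le> k'" for y
    using first_hit_after_even_block[OF D l j[unfolded b_def] row[unfolded b_def e_def]
        that[unfolded e_def k'_def]]
    unfolding e_def k'_def .
  have "k < k'" using \<open>k < K - D - e\<close> k'_def by simp
  have "air K D j k' = 1" using hit[of k'] k'_def by simp
  have gap: "air K D j y \<noteq> 1" if "k < y" "y < k'" for y
  proof (cases "y < K - D - e")
    case True
    have "2 * i \<le> lidx K D" "y < k + b" using l \<open>K - D - e \<le> k + b\<close> True by linarith+
    from air_even_block_gap[OF this(1) j[unfolded b_def] k(1,2)[unfolded a_def] that(1)
        this(2)[unfolded b_def] True[unfolded e_def]]
    show ?thesis .
  next
    case False
    then have "K - D - e \<le> y" by simp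
    with hit that(2) show ?thesis by (metis less_imp_le less_irrefl)
  qed
  have "dright K D j k = k' - k" using dright_eqI[OF \<open>k < k'\<close> \<open>air K D j k' = 1\<close> gap] .
  \<comment> \<open>\<open>k\<close> lies in the last period, so \<open>k + b\<close> overshoots the block by exactly the row offset\<close>
  moreover have "int k + int b = int k' + int c * int e"
  proof -
    have "k + b = K - D - a + a div b * b + (k - (K - D - a)) mod b"
      using \<open>k < K - D - e\<close> \<open>K - D - e \<le> k + b\<close> unfolding width
      by (rule mod_eq_in_last_period[OF k(1)])
    moreover have "(k - (K - D - a)) mod b = j - (K - b)"
      using air_on_even_block[OF _ j[unfolded b_def] k(1)[unfolded a_def]] l k(2) \<open>k < K - D - e\<close>
      unfolding a_def b_def e_def by simp
    ultimately have "k + b = K - D - e + (j - (K - b))" by (simp only: width)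
    then have "k + b = k' + c * e" using row(1) k'_def by simp
    then show ?thesis by (metis of_nat_add of_nat_mult)
  qed
  ultimately show ?thesis using \<open>k < k'\<close> \<open>air K D j k' = 1\<close> by (auto simp: of_nat_diff)
qed

theorem lemma3:
  fixes K D j k i :: nat
  defines "jR \<equiv> j - (K - lam K D (2 * int i))"
    and "kR \<equiv> k - (K - D - lam K D (2 * int i - 1))"
  assumes "1 \<le> D" and "D \<le> K - 1"
    and "air K D j k = 1"
    and "2 * i \<le> lidx K D"
    and "K - lam K D (2 * int i) \<le> j" and "j \<le> K - 1"
    and "K - D - lam K D (2 * int i - 1) \<le> k" and "k < K - D - lam K D (2 * int i + 1)"
  shows "(i \<le> lidx K D div 2 \<and> kR < (beta K D (2 * i) - 1) * lam K D (2 * int i) \<longrightarrow>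
            (\<exists>k'. k < k' \<and> air K D j k' = 1) \<and> dright K D j k = lam K D (2 * int i))
       \<and> (\<forall>c d :: nat. i + 1 \<le> lidx K D div 2
            \<and> (beta K D (2 * i) - 1) * lam K D (2 * int i) \<le> kR
            \<and> kR < beta K D (2 * i) * lam K D (2 * int i)
            \<and> jR = c * lam K D (2 * int i + 1) + d \<and> d < lam K D (2 * int i + 1) \<longrightarrow>
            (\<exists>k'. k < k' \<and> air K D j k' = 1) \<and>
            int (dright K D j k) = int (lam K D (2 * int i)) - int c * int (lam K D (2 * int i + 1)))"
proof -
  have D: "0 < D" "D < K" using assms(3,4) by auto
  have j: "K - lamS K D (Suc (2 * i)) \<le> j" "j < K" using assms(7,8) D by auto
  have k: "K - D - lamS K D (2 * i) \<le> k" using assms(9) by simp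
  show ?thesis
  proof (intro conjI impI allI)
    assume "i \<le> lidx K D div 2 \<and> kR < (beta K D (2 * i) - 1) * lam K D (2 * int i)"
    then show "\<exists>k'. k < k' \<and> air K D j k' = 1" "dright K D j k = lam K D (2 * int i)"
      using dright_even_block_interior[OF D assms(6) j k assms(5)] by (simp_all add: kR_def beta_even)
  next
    fix c d :: nat
    assume H: "i + 1 \<le> lidx K D div 2
            \<and> (beta K D (2 * i) - 1) * lam K D (2 * int i) \<le> kR
            \<and> kR < beta K D (2 * i) * lam K D (2 * int i)
            \<and> jR = c * lam K D (2 * int i + 1) + d \<and> d < lam K D (2 * int i + 1)"
    then have "2 * i + 2 \<le> lidx K D" by linarith
    with H show "\<exists>k'. k < k' \<and> air K D j k' = 1"
      "int (dright K D j k) = int (lam K D (2 * int i)) - int c * int (lam K D (2 * int i + 1))"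
      using dright_even_block_last_period[OF D _ j k assms(5)] by (simp_all add: kR_def jR_def beta_even)
  qed
qed

end
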